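(* Let $X$ be a set and $\mathcal{T}$ a topology on $X$. There exists a surjection $f:\mathcal{P}(X)\to\{-1,0,1\}$ satisfying $f(A)+f(B)=f(A\cup B)+f(A\cap B)$ for all $A,B\subseteq X$, such that $\mathcal{T}=\{\varnothing,X\}\cup f^{-1}(1)$ or $\mathcal{T}=\{\varnothing,X\}\cup f^{-1}(-1)$, if and only if $\mathcal{T}$ has one of the following forms: (Form 1) there exist $a\in X$ and an ultrafilter $\mathcal{F}'$ on $X\setminus\{a\}$ such that $\mathcal{T}=\{\varnothing,X\}\cup\mathcal{F}'$ or $\mathcal{T}=\{\varnothing,X\}\cup\{\{a\}\cup F: F\in\mathcal{F}'\}$; (Form 2) there exist $A\subseteq X$ and free ultrafilters $\mathcal{F}'$ on $A$ and $\mathcal{F}''$ on $X\setminus A$ such that $\mathcal{T}=\{\varnothing,X\}\cup\{F'\cup F'': F'\in\mathcal{F}',\,F''\in\mathcal{F}''\}$; (Form 3) there exist $a\ne b$ in $X$ such that $\mathcal{T}=\{\varnothing,X\}\cup\mathcal{P}(X\setminus\{a,b\})$.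
   Context: $\mathcal{P}(Y)$ denotes the power set of $Y$. An ultrafilter on a set $Y$ is a maximal proper filter of subsets of $Y$; it is free if the intersection of all its members is empty. *)

theory Defs
  imports "HOL-Analysis.Analysis"
begin

definition filter_on :: "'a set \<Rightarrow> 'a set set \<Rightarrow> bool" where
  "filter_on Y F \<longleftrightarrow> F \<subseteq> Pow Y \<and> Y \<in> F
     \<and> (\<forall>A B. A \<in> F \<longrightarrow> B \<in> F \<longrightarrow> A \<inter> B \<in> F)
     \<and> (\<forall>A B. A \<in> F \<longrightarrow> A \<subseteq> B \<longrightarrow> B \<subseteq> Y \<longrightarrow> B \<in> F)"

definition proper_filter_on :: "'a set \<Rightarrow> 'a set set \<Rightarrow> bool" where
  "proper_filter_on Y F \<longleftrightarrow> filter_on Y F \<and> {} \<notin> F"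

definition ultrafilter_on :: "'a set \<Rightarrow> 'a set set \<Rightarrow> bool" where
  "ultrafilter_on Y F \<longleftrightarrow> proper_filter_on Y F
     \<and> (\<forall>G. proper_filter_on Y G \<longrightarrow> F \<subseteq> G \<longrightarrow> G = F)"

definition free_ultrafilter_on :: "'a set \<Rightarrow> 'a set set \<Rightarrow> bool" where
  "free_ultrafilter_on Y F \<longleftrightarrow> ultrafilter_on Y F \<and> \<Inter> F = {}"

end

theory Submission
  imports Defs
begin

text \<open>A modular \<open>f\<close> is, up to the constant \<open>f {}\<close>, finitely additive; so wherever it takes
only two consecutive values \<open>c, c + 1\<close> on \<open>\<P>(Y)\<close>, the sets of value \<open>c + 1\<close> form an
ultrafilter on \<open>Y\<close>. Conversely, indicators of ultrafilters and of points are modular, which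
realises all three forms. Replacing \<open>f\<close> by \<open>-f\<close>, the open sets are \<open>{\<emptyset>, X}\<close> together with
\<open>{f = 1}\<close>, and we split on \<open>f \<emptyset>\<close>. If \<open>f \<emptyset> = -1\<close>, \<open>f\<close> is monotone: a point \<open>a\<close> with
\<open>f {a} = 0\<close> gives Form 1 via the value-0 sets of \<open>X - {a}\<close>, and otherwise any \<open>S\<close> with
\<open>f S = 0\<close> gives Form 2 via the value-0 sets of \<open>S\<close> and of \<open>X - S\<close>. If \<open>f \<emptyset> = 0\<close> or
\<open>f \<emptyset> = 1\<close>, closure of the topology under unions produces a point \<open>b\<close> with \<open>f {b} = -1\<close>,
respectively points \<open>a \<noteq> b\<close> with \<open>f {a} = f {b} = 0\<close>, giving Forms 1 and 3.\<close>

lemma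
  assumes "ultrafilter_on Y F"
  shows ultrafilter_on_subset: "F \<subseteq> Pow Y"
    and ultrafilter_on_carrier: "Y \<in> F"
    and ultrafilter_on_empty: "{} \<notin> F"
    and ultrafilter_on_Int: "A \<in> F \<Longrightarrow> B \<in> F \<Longrightarrow> A \<inter> B \<in> F"
    and ultrafilter_on_mono: "A \<in> F \<Longrightarrow> A \<subseteq> B \<Longrightarrow> B \<subseteq> Y \<Longrightarrow> B \<in> F"
  using assms unfolding ultrafilter_on_def proper_filter_on_def filter_on_def by blast+

lemma ultrafilter_on_Diff:
  assumes U: "ultrafilter_on Y F" and B: "B \<subseteq> Y" "B \<notin> F"
  shows "Y - B \<in> F"
proof -
  \<comment> \<open>The filter generated by \<open>F\<close> and \<open>B\<close> strictly extends \<open>F\<close>, so it must be improper.\<close>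
  define G where "G = {C. C \<subseteq> Y \<and> (\<exists>D\<in>F. D \<inter> B \<subseteq> C)}"
  have "filter_on Y G"
    unfolding filter_on_def
  proof (intro conjI allI impI)
    show "G \<subseteq> Pow Y" "Y \<in> G"
      unfolding G_def using ultrafilter_on_carrier[OF U] by blast+
  next
    fix A C assume "A \<in> G" "C \<in> G"
    then obtain D E where "D \<in> F" "E \<in> F" "D \<inter> B \<subseteq> A" "E \<inter> B \<subseteq> C" "A \<subseteq> Y" "C \<subseteq> Y"
      unfolding G_def by blast
    then show "A \<inter> C \<in> G"
      unfolding G_def using ultrafilter_on_Int[OF U, of D E] by blast
  next
    fix A C assume "A \<in> G" "A \<subseteq> C" "C \<subseteq> Y"
    then show "C \<in> G" unfolding G_def by blast
  qed
  moreover have "F \<subseteq> G" and "B \<in> G"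
    using ultrafilter_on_subset[OF U] ultrafilter_on_carrier[OF U] B unfolding G_def by blast+
  ultimately have "{} \<in> G"
    using U B(2) unfolding ultrafilter_on_def proper_filter_on_def by blast
  then obtain D where "D \<in> F" "D \<inter> B = {}"
    unfolding G_def by blast
  then show ?thesis
    using ultrafilter_on_mono[OF U, of D "Y - B"] ultrafilter_on_subset[OF U] by blast
qed

lemma ultrafilter_on_Un_iff:
  assumes U: "ultrafilter_on Y F" and "A \<subseteq> Y" "B \<subseteq> Y"
  shows "A \<union> B \<in> F \<longleftrightarrow> A \<in> F \<or> B \<in> F"
proof
  assume AB: "A \<union> B \<in> F"
  show "A \<in> F \<or> B \<in> F"
  proof (rule ccontr)
    assume "\<not> (A \<in> F \<or> B \<in> F)"
    then have "Y - A \<in> F" "Y - B \<in> F" using ultrafilter_on_Diff[OF U] assms by auto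
    then have "(Y - A) \<inter> (Y - B) \<inter> (A \<union> B) \<in> F"
      using ultrafilter_on_Int[OF U] AB by blast
    moreover have "(Y - A) \<inter> (Y - B) \<inter> (A \<union> B) = {}" by blast
    ultimately show False using ultrafilter_on_empty[OF U] by simp
  qed
qed (use ultrafilter_on_mono[OF U, of A "A \<union> B"] ultrafilter_on_mono[OF U, of B "A \<union> B"] assms
    in blast)

lemma ultrafilter_on_Int_iff:
  assumes U: "ultrafilter_on Y F" and "A \<subseteq> Y" "B \<subseteq> Y"
  shows "A \<inter> B \<in> F \<longleftrightarrow> A \<in> F \<and> B \<in> F"
  using ultrafilter_on_Int[OF U, of A B] ultrafilter_on_mono[OF U, of "A \<inter> B" A]
    ultrafilter_on_mono[OF U, of "A \<inter> B" B] assms by blast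

definition ultrafilter_indicator :: "'a set \<Rightarrow> 'a set set \<Rightarrow> 'a set \<Rightarrow> int" where
  "ultrafilter_indicator Y F A = (if A \<inter> Y \<in> F then 1 else 0)"

lemma ultrafilter_indicator_Un_Int:
  assumes "ultrafilter_on Y F"
  shows "ultrafilter_indicator Y F A + ultrafilter_indicator Y F B
       = ultrafilter_indicator Y F (A \<union> B) + ultrafilter_indicator Y F (A \<inter> B)"
proof -
  have "(A \<union> B) \<inter> Y = A \<inter> Y \<union> B \<inter> Y" "(A \<inter> B) \<inter> Y = A \<inter> Y \<inter> (B \<inter> Y)" by blast+
  then show ?thesis
    using ultrafilter_on_Un_iff[OF assms, of "A \<inter> Y" "B \<inter> Y"]
      ultrafilter_on_Int_iff[OF assms, of "A \<inter> Y" "B \<inter> Y"]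
    unfolding ultrafilter_indicator_def by auto
qed

definition modular :: "'a set \<Rightarrow> ('a set \<Rightarrow> int) \<Rightarrow> bool" where
  "modular X f \<longleftrightarrow> (\<forall>A B. A \<subseteq> X \<longrightarrow> B \<subseteq> X \<longrightarrow> f A + f B = f (A \<union> B) + f (A \<inter> B))"

lemma modular_ultrafilter_indicator:
  "ultrafilter_on Y F \<Longrightarrow> modular X (ultrafilter_indicator Y F)"
  unfolding modular_def using ultrafilter_indicator_Un_Int by blast

lemma modular_point_indicator: "modular X (\<lambda>A. if a \<in> A then 1 else 0)"
  unfolding modular_def by auto

lemma modular_const: "modular X (\<lambda>A. c)"
  unfolding modular_def by simp

lemma modular_add: "modular X f \<Longrightarrow> modular X g \<Longrightarrow> modular X (\<lambda>A. f A + g A)"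
  unfolding modular_def by (smt (verit))

lemma modular_diff: "modular X f \<Longrightarrow> modular X g \<Longrightarrow> modular X (\<lambda>A. f A - g A)"
  unfolding modular_def by (smt (verit))

lemma modular_uminus: "modular X f \<Longrightarrow> modular X (\<lambda>A. - f A)"
  unfolding modular_def by (smt (verit))

lemma modular_Un_disjoint:
  assumes "modular X f" "A \<subseteq> X" "B \<subseteq> X" "A \<inter> B = {}"
  shows "f (A \<union> B) = f A + f B - f {}"
proof -
  have "f A + f B = f (A \<union> B) + f (A \<inter> B)" using assms(1-3) unfolding modular_def by blast
  then show ?thesis using assms(4) by simp
qed

lemma modular_Diff:
  assumes "modular X f" "B \<subseteq> A" "A \<subseteq> X"
  shows "f A = f B + f (A - B) - f {}"
proof -
  have "B \<union> (A - B) = A" "B \<subseteq> X" "A - B \<subseteq> X" "B \<inter> (A - B) = {}"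
    using assms(2,3) by blast+
  then show ?thesis using modular_Un_disjoint[OF assms(1), of B "A - B"] by simp
qed

lemma ultrafilter_on_level_set:
  assumes m: "modular X f" and Y: "Y \<subseteq> X"
    and two_valued: "\<And>B. B \<subseteq> Y \<Longrightarrow> f B = f {} \<or> f B = f {} + 1"
    and top: "f Y = f {} + 1"
  shows "ultrafilter_on Y {B. B \<subseteq> Y \<and> f B = f {} + 1}" (is "ultrafilter_on Y ?F")
proof -
  have value_Diff: "f B = f A + f (B - A) - f {}" if "A \<subseteq> B" "B \<subseteq> Y" for A B
    using modular_Diff[OF m that(1)] that Y by blast
  have "filter_on Y ?F"
    unfolding filter_on_def
  proof (intro conjI allI impI)
    fix A B assume A: "A \<in> ?F" and B: "B \<in> ?F"
    have "A \<union> B \<subseteq> Y" "A \<inter> B \<subseteq> Y" using A B by auto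
    moreover have "f A + f B = f (A \<union> B) + f (A \<inter> B)"
      using m A B Y unfolding modular_def by blast
    ultimately show "A \<inter> B \<in> ?F"
      using A B two_valued[of "A \<union> B"] two_valued[of "A \<inter> B"] by auto
  next
    fix A B assume "A \<in> ?F" "A \<subseteq> B" "B \<subseteq> Y"
    moreover have "B - A \<subseteq> Y" using calculation by blast
    ultimately show "B \<in> ?F"
      using value_Diff[of A B] two_valued[of B] two_valued[of "B - A"] by auto
  qed (use top in auto)
  then have proper: "proper_filter_on Y ?F"
    unfolding proper_filter_on_def by simp
  have "G = ?F" if G: "proper_filter_on Y G" and FG: "?F \<subseteq> G" for G
  proof (rule antisym[OF subsetI FG])
    have G_Pow: "G \<subseteq> Pow Y" and G_Int: "\<And>A C. A \<in> G \<Longrightarrow> C \<in> G \<Longrightarrow> A \<inter> C \<in> G"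
      and G_empty: "{} \<notin> G"
      using G unfolding proper_filter_on_def filter_on_def by blast+
    fix B assume B: "B \<in> G"
    then have BY: "B \<subseteq> Y" using G_Pow by blast
    show "B \<in> ?F"
    proof (rule ccontr)
      assume "B \<notin> ?F"
      then have "f B = f {}" using two_valued[OF BY] BY by auto
      then have "Y - B \<in> G" using value_Diff[OF BY order_refl] top FG by auto
      then have "B \<inter> (Y - B) \<in> G" using G_Int B by blast
      moreover have "B \<inter> (Y - B) = {}" by blast
      ultimately show False using G_empty by simp
    qed
  qed
  with proper show ?thesis
    unfolding ultrafilter_on_def by blast
qed

lemma level_set_Inter_empty:
  assumes m: "modular X f" and Y: "Y \<subseteq> X" and top: "f Y = f {} + 1"
    and points: "\<And>x. x \<in> Y \<Longrightarrow> f {x} = f {}"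
  shows "\<Inter>{B. B \<subseteq> Y \<and> f B = f {} + 1} = {}"
proof (rule ccontr)
  assume "\<Inter>{B. B \<subseteq> Y \<and> f B = f {} + 1} \<noteq> {}"
  then obtain x where x: "x \<in> \<Inter>{B. B \<subseteq> Y \<and> f B = f {} + 1}" by blast
  then have "x \<in> Y" using top by blast
  then have "f (Y - {x}) = f {} + 1"
    using modular_Diff[OF m, of "{x}" Y] Y top points by simp
  then show False using x by blast
qed

definition canonical_topology :: "'a set \<Rightarrow> 'a set set \<Rightarrow> bool" where
  "canonical_topology X \<T> \<longleftrightarrow>
     (\<exists>a \<in> X. \<exists>F'. ultrafilter_on (X - {a}) F'
        \<and> (\<T> = {{}, X} \<union> F' \<or> \<T> = {{}, X} \<union> (\<lambda>F. insert a F) ` F'))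
   \<or> (\<exists>A. A \<subseteq> X \<and> (\<exists>F' F''. free_ultrafilter_on A F' \<and> free_ultrafilter_on (X - A) F''
        \<and> \<T> = {{}, X} \<union> {G' \<union> G'' | G' G''. G' \<in> F' \<and> G'' \<in> F''}))
   \<or> (\<exists>a \<in> X. \<exists>b \<in> X. a \<noteq> b \<and> \<T> = {{}, X} \<union> Pow (X - {a, b}))"

lemma canonical_topology_ultrafilter:
  assumes "a \<in> X" "ultrafilter_on (X - {a}) F"
  shows "canonical_topology X ({{}, X} \<union> F)"
  unfolding canonical_topology_def using assms by (intro disjI1 bexI[of _ a] exI[of _ F]) simp_all

lemma canonical_topology_insert_ultrafilter:
  assumes "a \<in> X" "ultrafilter_on (X - {a}) F"
  shows "canonical_topology X ({{}, X} \<union> insert a ` F)"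
  unfolding canonical_topology_def using assms by (intro disjI1 bexI[of _ a] exI[of _ F]) simp_all

lemma canonical_topology_free_ultrafilters:
  assumes "A \<subseteq> X" "free_ultrafilter_on A F'" "free_ultrafilter_on (X - A) F''"
  shows "canonical_topology X ({{}, X} \<union> {G' \<union> G'' | G' G''. G' \<in> F' \<and> G'' \<in> F''})"
  unfolding canonical_topology_def using assms
  by (intro disjI2[OF disjI1] exI[of _ A] conjI exI[of _ F'] exI[of _ F'']) simp_all

lemma canonical_topology_Pow_Diff:
  assumes "a \<in> X" "b \<in> X" "a \<noteq> b"
  shows "canonical_topology X ({{}, X} \<union> Pow (X - {a, b}))"
  unfolding canonical_topology_def using assms by (intro disjI2 bexI[of _ a] bexI[of _ b]) simp_all

definition modular_level_set :: "'a set \<Rightarrow> 'a set set \<Rightarrow> bool" where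
  "modular_level_set X L \<longleftrightarrow>
     (\<exists>f. f ` Pow X = {-1, 0, 1} \<and> modular X f \<and> L = {A \<in> Pow X. f A = 1})"

locale trivalued_modular =
  fixes X :: "'a set" and f :: "'a set \<Rightarrow> int"
  assumes modular: "modular X f" and range: "f ` Pow X = {-1, 0, 1}"
begin

lemma value_cases: "A \<subseteq> X \<Longrightarrow> f A = -1 \<or> f A = 0 \<or> f A = 1"
  using range by blast

lemma value_attained:
  assumes "v \<in> {-1, 0, 1}"
  obtains A where "A \<subseteq> X" "f A = v"
  using assms range by (metis PowD imageE)

lemma value_Un_disjoint: "A \<subseteq> X \<Longrightarrow> B \<subseteq> X \<Longrightarrow> A \<inter> B = {} \<Longrightarrow> f (A \<union> B) = f A + f B - f {}"
  by (rule modular_Un_disjoint[OF modular])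

lemma value_Diff: "B \<subseteq> A \<Longrightarrow> A \<subseteq> X \<Longrightarrow> f A = f B + f (A - B) - f {}"
  by (rule modular_Diff[OF modular])

context
  assumes empty_neg: "f {} = -1"
begin

lemma mono_subset:
  assumes "B \<subseteq> A" "A \<subseteq> X"
  shows "f B \<le> f A"
proof -
  have "A - B \<subseteq> X" using assms by blast
  then show ?thesis using value_Diff[OF assms] value_cases[of "A - B"] empty_neg by auto
qed

lemma value_X_eq_1: "f X = 1"
proof -
  obtain A where "A \<subseteq> X" "f A = 1" by (rule value_attained[of 1]) simp
  then show ?thesis using mono_subset[of A X] value_cases[of X] by auto
qed

lemma complement_value: "S \<subseteq> X \<Longrightarrow> f (X - S) = - f S"
  using value_Diff[of S X] value_X_eq_1 empty_neg by simp

lemma zero_level_ultrafilter: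
  assumes "Y \<subseteq> X" "f Y = 0"
  shows "ultrafilter_on Y {B. B \<subseteq> Y \<and> f B = 0}"
proof -
  have "f B = f {} \<or> f B = f {} + 1" if "B \<subseteq> Y" for B
    using mono_subset[OF that assms(1)] value_cases[of B] that assms empty_neg by auto
  from ultrafilter_on_level_set[OF modular assms(1) this] show ?thesis
    using assms(2) empty_neg by simp
qed

lemma zero_level_free_ultrafilter:
  assumes "Y \<subseteq> X" "f Y = 0" and no_zero_point: "\<And>x. x \<in> Y \<Longrightarrow> f {x} \<noteq> 0"
  shows "free_ultrafilter_on Y {B. B \<subseteq> Y \<and> f B = 0}"
proof -
  have "f {x} = f {}" if "x \<in> Y" for x
    using mono_subset[of "{x}" Y] value_cases[of "{x}"] no_zero_point[OF that] that assms empty_neg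
    by auto
  from level_set_Inter_empty[OF modular assms(1) _ this] show ?thesis
    using zero_level_ultrafilter[OF assms(1,2)] assms(2) empty_neg
    unfolding free_ultrafilter_on_def by simp
qed

lemma level_set_insert:
  assumes a: "a \<in> X" "f {a} = 0"
  shows "{A \<in> Pow X. f A = 1} = insert a ` {B. B \<subseteq> X - {a} \<and> f B = 0}"
proof -
  have insert_value: "f (insert a B) = f B + 1" if "B \<subseteq> X - {a}" for B
    using value_Un_disjoint[of "{a}" B] that a empty_neg by auto
  have "A \<in> insert a ` {B. B \<subseteq> X - {a} \<and> f B = 0}" if A: "A \<subseteq> X" "f A = 1" for A
  proof -
    have "a \<in> A"
      using mono_subset[of A "X - {a}"] complement_value[of "{a}"] a A by auto
    then have "A = insert a (A - {a})" "A - {a} \<subseteq> X - {a}" using A by blast+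
    then have "f (A - {a}) = 0" using insert_value[of "A - {a}"] A by simp
    then show ?thesis using \<open>A = insert a (A - {a})\<close> \<open>A - {a} \<subseteq> X - {a}\<close> by blast
  qed
  then show ?thesis using insert_value a by auto
qed

lemma level_set_split:
  assumes S: "S \<subseteq> X" "f S = 0"
  shows "{A \<in> Pow X. f A = 1}
       = {G' \<union> G'' | G' G''. G' \<in> {B. B \<subseteq> S \<and> f B = 0} \<and> G'' \<in> {B. B \<subseteq> X - S \<and> f B = 0}}"
    (is "_ = ?P")
proof (intro equalityI subsetI)
  fix A assume "A \<in> {A \<in> Pow X. f A = 1}"
  then have A: "A \<subseteq> X" "f A = 1" by auto
  have "A \<inter> S \<subseteq> X" "A - S \<subseteq> X" "A \<inter> S \<inter> (A - S) = {}" using A by blast+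
  then have "f A = f (A \<inter> S) + f (A - S) + 1"
    using value_Un_disjoint[of "A \<inter> S" "A - S"] empty_neg by (simp add: Int_Diff_Un)
  then have "f (A \<inter> S) = 0" "f (A - S) = 0"
    using mono_subset[of "A \<inter> S" S] mono_subset[of "A - S" "X - S"] complement_value[of S] A S
    by fastforce+
  then show "A \<in> ?P"
    using A by (intro CollectI exI[of _ "A \<inter> S"] exI[of _ "A - S"]) (auto simp: Int_Diff_Un)
next
  fix A assume "A \<in> ?P"
  then obtain G' G'' where "G' \<subseteq> S" "f G' = 0" "G'' \<subseteq> X - S" "f G'' = 0" "A = G' \<union> G''"
    by blast
  then show "A \<in> {A \<in> Pow X. f A = 1}"
    using value_Un_disjoint[of G' G''] S empty_neg by auto
qed

lemma canonical_topology_if_empty_neg: "canonical_topology X ({{}, X} \<union> {A \<in> Pow X. f A = 1})"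
proof (cases "\<exists>a\<in>X. f {a} = 0")
  case True
  then obtain a where a: "a \<in> X" "f {a} = 0" by blast
  let ?F = "{B. B \<subseteq> X - {a} \<and> f B = 0}"
  have "ultrafilter_on (X - {a}) ?F"
    using zero_level_ultrafilter complement_value[of "{a}"] a by simp
  then show ?thesis
    unfolding level_set_insert[OF a] by (rule canonical_topology_insert_ultrafilter[OF a(1)])
next
  case False
  obtain S where S: "S \<subseteq> X" "f S = 0" by (rule value_attained[of 0]) simp
  let ?F' = "{B. B \<subseteq> S \<and> f B = 0}" and ?F'' = "{B. B \<subseteq> X - S \<and> f B = 0}"
  have F': "free_ultrafilter_on S ?F'" and F'': "free_ultrafilter_on (X - S) ?F''"
    using zero_level_free_ultrafilter complement_value[of S] S False by auto
  show ?thesis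
    unfolding level_set_split[OF S] by (rule canonical_topology_free_ultrafilters[OF S(1) F' F''])
qed

end

context
  assumes empty_zero: "f {} = 0"
begin

lemma disjoint_pos_neg:
  obtains P S where "P \<subseteq> X" "S \<subseteq> X" "P \<inter> S = {}" "f P = 1" "f S = -1"
proof -
  obtain A where A: "A \<subseteq> X" "f A = 1" by (rule value_attained[of 1]) simp
  obtain B where B: "B \<subseteq> X" "f B = -1" by (rule value_attained[of "-1"]) simp
  have subsets: "A \<inter> B \<subseteq> X" "A - B \<subseteq> X" "B - A \<subseteq> X"
    and disjoint: "A \<inter> B \<inter> (A - B) = {}" "A \<inter> B \<inter> (B - A) = {}"
    and parts: "A \<inter> B \<union> (A - B) = A" "A \<inter> B \<union> (B - A) = B"
    using A B by blast+
  have "f A = f (A \<inter> B) + f (A - B)" "f B = f (A \<inter> B) + f (B - A)"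
    using value_Un_disjoint[OF subsets(1,2) disjoint(1)]
      value_Un_disjoint[OF subsets(1,3) disjoint(2)] parts empty_zero
    by simp_all
  then have "f (A - B) = 1" "f (B - A) = -1"
    using value_cases[OF subsets(1)] value_cases[OF subsets(2)] value_cases[OF subsets(3)] A B
    by auto
  then show ?thesis using that[of "A - B" "B - A"] A B by blast
qed

context
  assumes union_closed:
    "\<And>\<U>. \<U> \<subseteq> {A \<in> Pow X. f A = 1} \<Longrightarrow> \<Union>\<U> \<in> {{}, X} \<union> {A \<in> Pow X. f A = 1}"
begin

lemma exists_neg_point: obtains b where "b \<in> X" "f {b} = -1"
proof -
  obtain P S where PS: "P \<subseteq> X" "S \<subseteq> X" "P \<inter> S = {}" "f P = 1" "f S = -1"
    by (rule disjoint_pos_neg)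
  have "\<exists>b\<in>S. f {b} = -1"
  proof (rule ccontr)
    assume no_neg: "\<not> (\<exists>b\<in>S. f {b} = -1)"
    obtain x0 where x0: "x0 \<in> S" using PS empty_zero by fastforce
    have point: "f {x} = 0 \<and> f (P \<union> {x}) = 1" if "x \<in> S" for x
    proof -
      have "{x} \<subseteq> X" "P \<union> {x} \<subseteq> X" "P \<inter> {x} = {}" using that PS by blast+
      then show ?thesis
        using value_Un_disjoint[of P "{x}"] value_cases[of "P \<union> {x}"] value_cases[of "{x}"]
          no_neg that PS empty_zero by auto
    qed
    \<comment> \<open>Then \<open>P\<close> and the open sets \<open>P \<union> {x}\<close>, \<open>x \<noteq> x0\<close>, have an open union
      of value \<open>f P + f S - f {x0} = 0\<close>.\<close>
    let ?\<U> = "insert P ((\<lambda>x. P \<union> {x}) ` (S - {x0}))"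
    have "?\<U> \<subseteq> {A \<in> Pow X. f A = 1}" using point PS by auto
    then have "\<Union>?\<U> \<in> {{}, X} \<union> {A \<in> Pow X. f A = 1}" by (rule union_closed)
    moreover have "\<Union>?\<U> = P \<union> (S - {x0})" by blast
    ultimately have union_open: "P \<union> (S - {x0}) \<in> {{}, X} \<union> {A \<in> Pow X. f A = 1}"
      by (simp only:)
    have "f (S - {x0}) = -1"
      using value_Diff[of "{x0}" S] point[OF x0] x0 PS empty_zero by simp
    then have "f (P \<union> (S - {x0})) = 0"
      using value_Un_disjoint[of P "S - {x0}"] PS empty_zero by auto
    moreover have "P \<noteq> {}" "x0 \<notin> P \<union> (S - {x0})" "x0 \<in> X"
      using PS x0 empty_zero by auto
    ultimately show False using union_open by auto
  qed
  then show ?thesis using that PS(2) by blast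
qed

lemma level_set_ultrafilter:
  obtains b where "b \<in> X" "ultrafilter_on (X - {b}) {A \<in> Pow X. f A = 1}"
proof -
  obtain b where b: "b \<in> X" "f {b} = -1" by (rule exists_neg_point)
  have insert_value: "f (insert b B) = f B - 1" if "B \<subseteq> X - {b}" for B
    using value_Un_disjoint[of "{b}" B] that b empty_zero by auto
  have two_valued: "f B = f {} \<or> f B = f {} + 1" if "B \<subseteq> X - {b}" for B
  proof -
    have "insert b B \<subseteq> X" "B \<subseteq> X" using that b by blast+
    then show ?thesis
      using insert_value[OF that] value_cases[of "insert b B"] value_cases[of B] empty_zero
      by auto
  qed
  have avoids_b: "b \<notin> A" if "A \<subseteq> X" "f A = 1" for A
  proof
    assume "b \<in> A"
    then have "insert b (A - {b}) = A" "A - {b} \<subseteq> X - {b}" "A - {b} \<subseteq> X" using that by blast+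
    then show False using insert_value[of "A - {b}"] value_cases[of "A - {b}"] that by auto
  qed
  obtain A where A: "A \<subseteq> X" "f A = 1" by (rule value_attained[of 1]) simp
  then have "A \<subseteq> X - {b}" "X - {b} - A \<subseteq> X - {b}" using avoids_b by blast+
  then have "f (X - {b}) = f {} + 1"
    using value_Diff[of A "X - {b}"] two_valued[of "X - {b} - A"] two_valued[of "X - {b}"] A
      empty_zero by auto
  from ultrafilter_on_level_set[OF modular Diff_subset two_valued this]
  have "ultrafilter_on (X - {b}) {B. B \<subseteq> X - {b} \<and> f B = 1}"
    unfolding empty_zero by simp
  moreover have "{B. B \<subseteq> X - {b} \<and> f B = 1} = {A \<in> Pow X. f A = 1}"
    using avoids_b by auto
  ultimately show ?thesis using that b(1) by metis
qed

end

end

context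
  assumes empty_pos: "f {} = 1"
begin

lemma antimono_subset:
  assumes "B \<subseteq> A" "A \<subseteq> X"
  shows "f A \<le> f B"
proof -
  have "A - B \<subseteq> X" using assms by blast
  then show ?thesis using value_Diff[OF assms] value_cases[of "A - B"] empty_pos by auto
qed

lemma value_X_eq_neg1: "f X = -1"
proof -
  obtain A where "A \<subseteq> X" "f A = -1" by (rule value_attained[of "-1"]) simp
  then show ?thesis using antimono_subset[of A X] value_cases[of X] by auto
qed

context
  assumes union_closed:
    "\<And>\<U>. \<U> \<subseteq> {A \<in> Pow X. f A = 1} \<Longrightarrow> \<Union>\<U> \<in> {{}, X} \<union> {A \<in> Pow X. f A = 1}"
begin

lemma exists_zero_point:
  assumes Z: "Z \<subseteq> X" "f Z = 0"
  obtains a where "a \<in> Z" "f {a} = 0"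
proof -
  have "\<exists>a\<in>Z. f {a} = 0"
  proof (rule ccontr)
    assume no_zero: "\<not> (\<exists>a\<in>Z. f {a} = 0)"
    \<comment> \<open>Then every point of \<open>Z\<close> is open, hence so is \<open>Z\<close>, although \<open>f Z = 0\<close>.\<close>
    have "f {x} = 1" if "x \<in> Z" for x
    proof -
      have "{x} \<subseteq> Z" "{x} \<subseteq> X" using that Z by blast+
      then show ?thesis
        using antimono_subset[of "{x}" Z] value_cases[of "{x}"] no_zero that Z by auto
    qed
    then have "(\<lambda>x. {x}) ` Z \<subseteq> {A \<in> Pow X. f A = 1}" using Z by blast
    then have "(\<Union>x\<in>Z. {x}) \<in> {{}, X} \<union> {A \<in> Pow X. f A = 1}" by (rule union_closed)
    then have "Z \<in> {{}, X} \<union> {A \<in> Pow X. f A = 1}" by simp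
    then show False using Z empty_pos value_X_eq_neg1 by auto
  qed
  then show ?thesis using that by blast
qed

lemma level_set_two_points:
  obtains a b where "a \<in> X" "b \<in> X" "a \<noteq> b" "{A \<in> Pow X. f A = 1} = Pow (X - {a, b})"
proof -
  obtain S where S: "S \<subseteq> X" "f S = 0" by (rule value_attained[of 0]) simp
  have "f (X - S) = 0" using value_Diff[OF S(1)] S value_X_eq_neg1 empty_pos by simp
  then obtain b where b: "b \<in> X - S" "f {b} = 0"
    using exists_zero_point[of "X - S"] by blast
  obtain a where a: "a \<in> S" "f {a} = 0" by (rule exists_zero_point[OF S])
  have ab: "a \<noteq> b" "a \<in> X" "b \<in> X" using a b S by auto
  then have "f ({a} \<union> {b}) = -1"
    using value_Un_disjoint[of "{a}" "{b}"] a b empty_pos by simp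
  then have "f {a, b} = -1" by (metis insert_is_Un)
  then have rest: "f (X - {a, b}) = 1"
    using value_Diff[of "{a, b}" X] ab value_X_eq_neg1 empty_pos by simp
  have "{A \<in> Pow X. f A = 1} = Pow (X - {a, b})"
  proof (intro equalityI subsetI)
    fix A assume "A \<in> {A \<in> Pow X. f A = 1}"
    then show "A \<in> Pow (X - {a, b})"
      using antimono_subset[of "{a}" A] antimono_subset[of "{b}" A] a b by auto
  next
    fix A assume "A \<in> Pow (X - {a, b})"
    then show "A \<in> {A \<in> Pow X. f A = 1}"
      using antimono_subset[of A "X - {a, b}"] value_cases[of A] rest by auto
  qed
  then show ?thesis using that ab by blast
qed

end

end

lemma canonical_topology_level_set:
  assumes "\<And>\<U>. \<U> \<subseteq> {A \<in> Pow X. f A = 1} \<Longrightarrow> \<Union>\<U> \<in> {{}, X} \<union> {A \<in> Pow X. f A = 1}"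
  shows "canonical_topology X ({{}, X} \<union> {A \<in> Pow X. f A = 1})"
proof -
  consider "f {} = -1" | "f {} = 0" | "f {} = 1" using value_cases[of "{}"] by auto
  then show ?thesis
  proof cases
    case 1
    then show ?thesis by (rule canonical_topology_if_empty_neg)
  next
    case 2
    obtain b where "b \<in> X" "ultrafilter_on (X - {b}) {A \<in> Pow X. f A = 1}"
      by (rule level_set_ultrafilter[OF 2 assms])
    then show ?thesis by (rule canonical_topology_ultrafilter)
  next
    case 3
    obtain a b where "a \<in> X" "b \<in> X" "a \<noteq> b" "{A \<in> Pow X. f A = 1} = Pow (X - {a, b})"
      by (rule level_set_two_points[OF 3 assms])
    then show ?thesis using canonical_topology_Pow_Diff by simp
  qed
qed

end

lemma canonical_topology_if_modular_level_set:
  assumes "modular_level_set X L" and "\<And>\<U>. \<U> \<subseteq> L \<Longrightarrow> \<Union>\<U> \<in> {{}, X} \<union> L"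
  shows "canonical_topology X ({{}, X} \<union> L)"
proof -
  obtain f where "f ` Pow X = {-1, 0, 1}" "modular X f" "L = {A \<in> Pow X. f A = 1}"
    using assms(1) unfolding modular_level_set_def by blast
  then show ?thesis
    using trivalued_modular.canonical_topology_level_set[of X f] assms(2)
    unfolding trivalued_modular_def by simp
qed

lemma modular_level_setI:
  assumes "modular X f" and vals: "\<And>A. A \<subseteq> X \<Longrightarrow> f A \<in> {-1, 0, 1}"
    and "P \<subseteq> X" "f P = -1" "Q \<subseteq> X" "f Q = 0" "R \<subseteq> X" "f R = 1"
    and "L = {A \<in> Pow X. f A = 1}"
  shows "modular_level_set X L"
proof -
  have "f ` Pow X = {-1, 0, 1}"
  proof
    show "f ` Pow X \<subseteq> {-1, 0, 1}" using vals by blast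
    show "{-1, 0, 1} \<subseteq> f ` Pow X"
      using assms(3-8) by (metis PowI empty_subsetI image_eqI insert_subset)
  qed
  then show ?thesis unfolding modular_level_set_def using assms(1,9) by blast
qed

lemma modular_level_set_ultrafilter:
  assumes a: "a \<in> X" and U: "ultrafilter_on (X - {a}) F"
  shows "modular_level_set X F"
proof (rule modular_level_setI)
  let ?f = "\<lambda>A. ultrafilter_indicator (X - {a}) F A - (if a \<in> A then 1 else 0)"
  show "modular X ?f"
    by (intro modular_diff modular_ultrafilter_indicator modular_point_indicator U)
  have trace: "A \<inter> (X - {a}) = A" if "A \<subseteq> X" "a \<notin> A" for A
    using that by blast
  show "F = {A \<in> Pow X. ?f A = 1}"
    using ultrafilter_on_subset[OF U]
    by (auto simp: ultrafilter_indicator_def Int_absorb2 trace split: if_splits)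
  show "?f {a} = -1" "?f {} = 0" "?f (X - {a}) = 1"
    using ultrafilter_on_empty[OF U] ultrafilter_on_carrier[OF U]
    by (auto simp: ultrafilter_indicator_def)
qed (use a in \<open>auto simp: ultrafilter_indicator_def\<close>)

lemma modular_level_set_insert_ultrafilter:
  assumes a: "a \<in> X" and U: "ultrafilter_on (X - {a}) F"
  shows "modular_level_set X (insert a ` F)"
proof (rule modular_level_setI)
  let ?f = "\<lambda>A. ultrafilter_indicator (X - {a}) F A + (if a \<in> A then 1 else 0) - 1"
  show "modular X ?f"
    by (intro modular_diff modular_add modular_ultrafilter_indicator modular_point_indicator
        modular_const U)
  have "insert a B \<inter> (X - {a}) = B" if "B \<in> F" for B
    using ultrafilter_on_subset[OF U] that by auto
  moreover have "A = insert a (A \<inter> (X - {a}))" if "A \<subseteq> X" "a \<in> A" for A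
    using that by auto
  ultimately show "insert a ` F = {A \<in> Pow X. ?f A = 1}"
    using ultrafilter_on_subset[OF U] a
    by (auto simp: ultrafilter_indicator_def image_iff split: if_splits)
  have "X \<inter> (X - {a}) = X - {a}" by blast
  then show "?f {} = -1" "?f {a} = 0" "?f X = 1"
    using ultrafilter_on_empty[OF U] ultrafilter_on_carrier[OF U] a
    by (auto simp: ultrafilter_indicator_def)
qed (use a in \<open>auto simp: ultrafilter_indicator_def\<close>)

lemma modular_level_set_ultrafilter_Un:
  assumes A: "A \<subseteq> X" and U': "ultrafilter_on A F'" and U'': "ultrafilter_on (X - A) F''"
  shows "modular_level_set X {G' \<union> G'' | G' G''. G' \<in> F' \<and> G'' \<in> F''}"
proof (rule modular_level_setI)
  let ?f = "\<lambda>B. ultrafilter_indicator A F' B + ultrafilter_indicator (X - A) F'' B - 1"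
  show "modular X ?f"
    by (intro modular_diff modular_add modular_ultrafilter_indicator modular_const U' U'')
  show "{G' \<union> G'' | G' G''. G' \<in> F' \<and> G'' \<in> F''} = {B \<in> Pow X. ?f B = 1}"
  proof (intro equalityI subsetI)
    fix B assume "B \<in> {G' \<union> G'' | G' G''. G' \<in> F' \<and> G'' \<in> F''}"
    then obtain G' G'' where G: "G' \<in> F'" "G'' \<in> F''" "B = G' \<union> G''" by blast
    moreover have "G' \<subseteq> A" "G'' \<subseteq> X - A"
      using G ultrafilter_on_subset[OF U'] ultrafilter_on_subset[OF U''] by auto
    moreover have "B \<inter> A = G'" "B \<inter> (X - A) = G''" using calculation by auto
    ultimately show "B \<in> {B \<in> Pow X. ?f B = 1}"
      using A by (auto simp: ultrafilter_indicator_def)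
  next
    fix B assume "B \<in> {B \<in> Pow X. ?f B = 1}"
    then have "B \<inter> A \<in> F'" "B \<inter> (X - A) \<in> F''" "B = B \<inter> A \<union> B \<inter> (X - A)"
      by (auto simp: ultrafilter_indicator_def split: if_splits)
    then show "B \<in> {G' \<union> G'' | G' G''. G' \<in> F' \<and> G'' \<in> F''}" by blast
  qed
  have "A \<inter> (X - A) = {}" "X \<inter> (X - A) = X - A" "X \<inter> A = A" using A by auto
  then show "?f {} = -1" "?f A = 0" "?f X = 1"
    using ultrafilter_on_empty[OF U'] ultrafilter_on_empty[OF U'']
      ultrafilter_on_carrier[OF U'] ultrafilter_on_carrier[OF U'']
    by (auto simp: ultrafilter_indicator_def)
qed (use A in \<open>auto simp: ultrafilter_indicator_def\<close>)

lemma modular_level_set_Pow_Diff: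
  assumes "a \<in> X" "b \<in> X" "a \<noteq> b"
  shows "modular_level_set X (Pow (X - {a, b}))"
proof (rule modular_level_setI)
  let ?f = "\<lambda>A. 1 - (if a \<in> A then 1 else 0) - (if b \<in> A then 1 else 0) :: int"
  show "modular X ?f"
    by (intro modular_diff modular_point_indicator modular_const)
  show "?f A \<in> {-1, 0, 1}" for A by simp
  show "?f X = -1" "?f {a} = 0" "?f {} = 1" using assms by simp_all
  show "X \<subseteq> X" "{a} \<subseteq> X" "{} \<subseteq> X" using assms by simp_all
  show "Pow (X - {a, b}) = {A \<in> Pow X. ?f A = 1}" by auto
qed

lemma modular_level_set_if_canonical_topology:
  assumes "canonical_topology X \<T>"
  obtains L where "modular_level_set X L" "\<T> = {{}, X} \<union> L"
  using assms unfolding canonical_topology_def free_ultrafilter_on_def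
proof (elim disjE bexE exE conjE)
  fix a F' assume "a \<in> X" "ultrafilter_on (X - {a}) F'" "\<T> = {{}, X} \<union> F'"
  then show thesis by (rule that[OF modular_level_set_ultrafilter])
next
  fix a F' assume "a \<in> X" "ultrafilter_on (X - {a}) F'" "\<T> = {{}, X} \<union> insert a ` F'"
  then show thesis by (rule that[OF modular_level_set_insert_ultrafilter])
next
  fix A F' F''
  assume "A \<subseteq> X" "ultrafilter_on A F'" "ultrafilter_on (X - A) F''"
    and "\<T> = {{}, X} \<union> {G' \<union> G'' | G' G''. G' \<in> F' \<and> G'' \<in> F''}"
  then show thesis by (rule that[OF modular_level_set_ultrafilter_Un])
next
  fix a b assume "a \<in> X" "b \<in> X" "a \<noteq> b" "\<T> = {{}, X} \<union> Pow (X - {a, b})"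
  then show thesis by (rule that[OF modular_level_set_Pow_Diff])
qed

lemma trivalued_modular_iff_canonical_topology:
  assumes union_closed: "\<And>\<U>. \<U> \<subseteq> \<T> \<Longrightarrow> \<Union>\<U> \<in> \<T>"
  shows "(\<exists>f. f ` Pow X = {-1, 0, 1} \<and> modular X f
      \<and> (\<T> = {{}, X} \<union> {A \<in> Pow X. f A = 1} \<or> \<T> = {{}, X} \<union> {A \<in> Pow X. f A = -1}))
   \<longleftrightarrow> canonical_topology X \<T>"
proof
  assume "\<exists>f. f ` Pow X = {-1, 0, 1} \<and> modular X f
      \<and> (\<T> = {{}, X} \<union> {A \<in> Pow X. f A = 1} \<or> \<T> = {{}, X} \<union> {A \<in> Pow X. f A = -1})"
  then obtain f where range: "f ` Pow X = {-1, 0, 1}" and m: "modular X f"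
    and \<T>: "\<T> = {{}, X} \<union> {A \<in> Pow X. f A = 1} \<or> \<T> = {{}, X} \<union> {A \<in> Pow X. f A = -1}"
    by blast
  have "(\<lambda>A. - f A) ` Pow X = {-1, 0, 1}"
    using range by (auto simp: image_image[of uminus f, symmetric] image_iff)
  then have "modular_level_set X {A \<in> Pow X. f A = -1}"
    using modular_uminus[OF m] unfolding modular_level_set_def
    by (intro exI[of _ "\<lambda>A. - f A"]) auto
  moreover have "modular_level_set X {A \<in> Pow X. f A = 1}"
    using range m unfolding modular_level_set_def by blast
  ultimately obtain L where L: "modular_level_set X L" and \<T>_L: "\<T> = {{}, X} \<union> L"
    using \<T> by blast
  have "\<Union>\<U> \<in> {{}, X} \<union> L" if "\<U> \<subseteq> L" for \<U>
    using union_closed[of \<U>] that \<T>_L by blast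
  then show "canonical_topology X \<T>"
    unfolding \<T>_L by (rule canonical_topology_if_modular_level_set[OF L])
next
  assume "canonical_topology X \<T>"
  then obtain L where "modular_level_set X L" "\<T> = {{}, X} \<union> L"
    by (rule modular_level_set_if_canonical_topology)
  then show "\<exists>f. f ` Pow X = {-1, 0, 1} \<and> modular X f
      \<and> (\<T> = {{}, X} \<union> {A \<in> Pow X. f A = 1} \<or> \<T> = {{}, X} \<union> {A \<in> Pow X. f A = -1})"
    unfolding modular_level_set_def by blast
qed

theorem theorem3:
  fixes T :: "'a topology"
  defines "X \<equiv> topspace T"
  shows "(\<exists>f :: 'a set \<Rightarrow> int.
            f ` Pow X = {-1, 0, 1}
          \<and> (\<forall>A B. A \<subseteq> X \<longrightarrow> B \<subseteq> X \<longrightarrow> f A + f B = f (A \<union> B) + f (A \<inter> B))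
          \<and> ({U. openin T U} = {{}, X} \<union> {A \<in> Pow X. f A = 1}
             \<or> {U. openin T U} = {{}, X} \<union> {A \<in> Pow X. f A = -1}))
     \<longleftrightarrow>
         ((\<exists>a \<in> X. \<exists>F'. ultrafilter_on (X - {a}) F'
              \<and> ({U. openin T U} = {{}, X} \<union> F'
                 \<or> {U. openin T U} = {{}, X} \<union> (\<lambda>F. insert a F) ` F'))
        \<or> (\<exists>A. A \<subseteq> X \<and> (\<exists>F' F''. free_ultrafilter_on A F' \<and> free_ultrafilter_on (X - A) F''
              \<and> {U. openin T U} = {{}, X} \<union> {G' \<union> G'' | G' G''. G' \<in> F' \<and> G'' \<in> F''}))
        \<or> (\<exists>a \<in> X. \<exists>b \<in> X. a \<noteq> b
              \<and> {U. openin T U} = {{}, X} \<union> Pow (X - {a, b})))"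
proof -
  have "\<Union>\<U> \<in> {U. openin T U}" if "\<U> \<subseteq> {U. openin T U}" for \<U>
    using that by blast
  from trivalued_modular_iff_canonical_topology[of "{U. openin T U}", OF this]
  show ?thesis unfolding modular_def canonical_topology_def .
qed

end
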